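(* Let $u_1,\dots,u_m\in\mathbf{B}^d\subset\mathbb{R}^d$ and positive weights $c_1,\dots,c_m$ form a John decomposition of the identity for functions. Then $\sum_{i=1}^m c_i=d+1$ and the convex hull of $u_1,\dots,u_m$ contains the ball $\frac{1}{d+1}\mathbf{B}^d$.
   Context: $\mathbf{B}^d$ is the closed Euclidean unit ball in $\mathbb{R}^d$. The height function is $\hbar(x)=\sqrt{1-|x|^2}$ for $x\in\mathbf{B}^d$ and $0$ otherwise. Points $u_1,\dots,u_m\in\mathbf{B}^d$ and positive weights $c_1,\dots,c_m$ form a John decomposition of the identity for functions if (1) $\sum_i c_i\, u_i\otimes u_i=\mathrm{Id}_d$ (where $u\otimes u$ is the map $x\mapsto\langle u,x\rangle u$), (2) $\sum_i c_i\,\hbar(u_i)^2=1$, and (3) $\sum_i c_i u_i=0$. *)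

theory Defs
  imports "HOL-Analysis.Analysis"
begin

definition height :: "'a::euclidean_space \<Rightarrow> real" where
  "height x = (if x \<in> cball 0 1 then sqrt (1 - (norm x)^2) else 0)"

text \<open>u tensor u as the linear map x |-> <u,x> u.\<close>
definition outer :: "'a::euclidean_space \<Rightarrow> 'a \<Rightarrow> 'a" where
  "outer u = (\<lambda>x. (u \<bullet> x) *\<^sub>R u)"

definition john_decomposition_fun ::
  "nat \<Rightarrow> (nat \<Rightarrow> 'a::euclidean_space) \<Rightarrow> (nat \<Rightarrow> real) \<Rightarrow> bool" where
  "john_decomposition_fun m u c \<longleftrightarrow>
     (\<forall>i<m. u i \<in> cball 0 1 \<and> c i > 0) \<and>
     (\<forall>x. (\<Sum>i<m. c i *\<^sub>R outer (u i) x) = x) \<and>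
     (\<Sum>i<m. c i * (height (u i))^2) = 1 \<and>
     (\<Sum>i<m. c i *\<^sub>R u i) = 0"

end

theory Submission
  imports Defs
begin

(* Testing the decomposition of the identity against v gives sum c_i (u_i . v)^2 = |v|^2;
   summing this over an orthonormal basis gives sum c_i |u_i|^2 = d, and then the height
   condition sum c_i (1 - |u_i|^2) = 1 yields sum c_i = d + 1.
   For the ball, let w /= 0 and h = max_i (u_i . w). Since -|w| <= u_i . w <= h, summing
   c_i (h - u_i . w) (|w| + u_i . w) >= 0 and using sum c_i u_i = 0 gives
   |w|^2 <= (d + 1) h |w|. So in every direction w the support function of the points is
   at least |w| / (d + 1), and by separation their convex hull contains the ball of
   radius 1 / (d + 1). *)

lemma sum_outer_eq_id_imp_sum_inner_sq:
  fixes u :: "'i \<Rightarrow> 'a::euclidean_space"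
  assumes "\<And>x. (\<Sum>i\<in>I. c i *\<^sub>R outer (u i) x) = x"
  shows "(\<Sum>i\<in>I. c i * (u i \<bullet> v)\<^sup>2) = v \<bullet> v"
proof -
  have "v \<bullet> v = v \<bullet> (\<Sum>i\<in>I. c i *\<^sub>R outer (u i) v)" using assms by simp
  also have "\<dots> = (\<Sum>i\<in>I. c i * (u i \<bullet> v)\<^sup>2)"
    by (simp add: inner_sum_right outer_def power2_eq_square inner_commute mult.assoc)
  finally show ?thesis by simp
qed

lemma sum_outer_eq_id_imp_sum_norm_sq:
  fixes u :: "'i \<Rightarrow> 'a::euclidean_space"
  assumes "\<And>x. (\<Sum>i\<in>I. c i *\<^sub>R outer (u i) x) = x"
  shows "(\<Sum>i\<in>I. c i * (norm (u i))\<^sup>2) = real DIM('a)"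
proof -
  have "(norm (u i))\<^sup>2 = (\<Sum>b\<in>Basis. (u i \<bullet> b)\<^sup>2)" for i
    unfolding power2_norm_eq_inner euclidean_inner[of "u i" "u i"] by (simp add: power2_eq_square)
  then have "(\<Sum>i\<in>I. c i * (norm (u i))\<^sup>2) = (\<Sum>i\<in>I. c i * (\<Sum>b\<in>Basis. (u i \<bullet> b)\<^sup>2))"
    by simp
  also have "\<dots> = (\<Sum>b\<in>(Basis::'a set). \<Sum>i\<in>I. c i * (u i \<bullet> b)\<^sup>2)"
    by (simp add: sum_distrib_left sum.swap[of _ I])
  also have "\<dots> = (\<Sum>b\<in>(Basis::'a set). b \<bullet> b)"
    using sum_outer_eq_id_imp_sum_inner_sq[OF assms] by simp
  finally show ?thesis by simp
qed

lemma height_sq: "u \<in> cball 0 1 \<Longrightarrow> (height u)\<^sup>2 = 1 - (norm u)\<^sup>2"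
  by (simp add: height_def power_le_one)

lemma john_decomposition_fun_sum_weights:
  fixes u :: "nat \<Rightarrow> 'a::euclidean_space"
  assumes "john_decomposition_fun m u c"
  shows "(\<Sum>i<m. c i) = real DIM('a) + 1"
proof -
  have "1 = (\<Sum>i<m. c i * (height (u i))\<^sup>2)"
    using assms by (simp add: john_decomposition_fun_def)
  also have "\<dots> = (\<Sum>i<m. c i * (1 - (norm (u i))\<^sup>2))"
    using assms by (simp add: john_decomposition_fun_def height_sq)
  also have "\<dots> = (\<Sum>i<m. c i) - (\<Sum>i<m. c i * (norm (u i))\<^sup>2)"
    by (simp add: right_diff_distrib sum_subtractf)
  also have "(\<Sum>i<m. c i * (norm (u i))\<^sup>2) = real DIM('a)"
    using assms by (intro sum_outer_eq_id_imp_sum_norm_sq) (simp add: john_decomposition_fun_def)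
  finally show ?thesis by simp
qed

lemma sum_inner_sq_le_support_bound:
  fixes u :: "'i \<Rightarrow> 'a::real_inner"
  assumes c: "\<And>i. i \<in> I \<Longrightarrow> c i \<ge> 0"
    and norm_u: "\<And>i. i \<in> I \<Longrightarrow> norm (u i) \<le> 1"
    and h: "\<And>i. i \<in> I \<Longrightarrow> u i \<bullet> w \<le> h"
    and quadratic: "(\<Sum>i\<in>I. c i * (u i \<bullet> w)\<^sup>2) = w \<bullet> w"
    and centred: "(\<Sum>i\<in>I. c i *\<^sub>R u i) = 0"
  shows "w \<bullet> w \<le> (\<Sum>i\<in>I. c i) * h * norm w"
proof -
  have "c i * (u i \<bullet> w)\<^sup>2 \<le> c i * (h * norm w) + (h - norm w) * (c i * (u i \<bullet> w))"
    if "i \<in> I" for i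
  proof -
    have "- (u i \<bullet> w) \<le> norm (u i) * norm w"
      using norm_cauchy_schwarz[of "- u i" w] by simp
    also have "\<dots> \<le> norm w" using mult_right_mono[OF norm_u[OF that], of "norm w"] by simp
    finally have "0 \<le> (h - u i \<bullet> w) * (norm w + u i \<bullet> w)" using h[OF that] by simp
    then have "(u i \<bullet> w)\<^sup>2 \<le> h * norm w + (h - norm w) * (u i \<bullet> w)"
      by (simp add: algebra_simps power2_eq_square)
    then have "c i * (u i \<bullet> w)\<^sup>2 \<le> c i * (h * norm w + (h - norm w) * (u i \<bullet> w))"
      using c[OF that] by (rule mult_left_mono)
    then show ?thesis by (simp add: algebra_simps)
  qed
  then have "w \<bullet> w \<le> (\<Sum>i\<in>I. c i * (h * norm w) + (h - norm w) * (c i * (u i \<bullet> w)))"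
    unfolding quadratic[symmetric] by (rule sum_mono)
  also have "\<dots> = (\<Sum>i\<in>I. c i) * (h * norm w) + (h - norm w) * ((\<Sum>i\<in>I. c i *\<^sub>R u i) \<bullet> w)"
    by (simp add: sum.distrib sum_distrib_left sum_distrib_right inner_sum_left)
  finally show ?thesis using centred by (simp add: mult.assoc)
qed

lemma john_decomposition_fun_support:
  fixes u :: "nat \<Rightarrow> 'a::euclidean_space"
  assumes john: "john_decomposition_fun m u c" and "w \<noteq> 0"
  shows "\<exists>i<m. norm w \<le> (real DIM('a) + 1) * (u i \<bullet> w)"
proof -
  have quadratic: "(\<Sum>i<m. c i * (u i \<bullet> w)\<^sup>2) = w \<bullet> w"
    using john by (intro sum_outer_eq_id_imp_sum_inner_sq) (simp add: john_decomposition_fun_def)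
  have "m \<noteq> 0"
  proof
    assume "m = 0"
    with quadratic \<open>w \<noteq> 0\<close> show False by simp
  qed
  define h where "h = Max ((\<lambda>i. u i \<bullet> w) ` {..<m})"
  have "h \<in> (\<lambda>i. u i \<bullet> w) ` {..<m}"
    unfolding h_def using \<open>m \<noteq> 0\<close> by (intro Max_in) auto
  then obtain k where "k < m" and k: "h = u k \<bullet> w" by auto
  have "w \<bullet> w \<le> (\<Sum>i<m. c i) * h * norm w"
    using john quadratic
    by (intro sum_inner_sq_le_support_bound) (auto simp: john_decomposition_fun_def h_def)
  then have "norm w * norm w \<le> ((real DIM('a) + 1) * h) * norm w"
    using john_decomposition_fun_sum_weights[OF john]
    by (simp add: power2_norm_eq_inner[symmetric] power2_eq_square)
  then have "norm w \<le> (real DIM('a) + 1) * h"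
    using \<open>w \<noteq> 0\<close> by simp
  then show ?thesis using \<open>k < m\<close> k by blast
qed

lemma cball_subset_convex_hull_if_support:
  fixes S :: "'a::euclidean_space set"
  assumes "finite S" and support: "\<And>w. w \<noteq> 0 \<Longrightarrow> \<exists>y\<in>S. r * norm w \<le> w \<bullet> y"
  shows "cball 0 r \<subseteq> convex hull S"
proof
  fix x :: 'a assume x: "x \<in> cball 0 r"
  show "x \<in> convex hull S"
  proof (rule ccontr)
    assume "x \<notin> convex hull S"
    moreover have "closed (convex hull S)"
      using \<open>finite S\<close> by (simp add: compact_imp_closed finite_imp_compact_convex_hull)
    ultimately obtain a b where ax: "a \<bullet> x < b" and hull: "\<forall>y\<in>convex hull S. b < a \<bullet> y"
      using separating_hyperplane_closed_point[OF convex_convex_hull] by blast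
    have "a \<noteq> 0"
    proof
      assume "a = 0"
      obtain e :: 'a where "e \<in> Basis" using nonempty_Basis by blast
      then obtain y where "y \<in> S" using support[of e] nonzero_Basis by blast
      then have "b < a \<bullet> y" using hull hull_inc[of y S] by blast
      with ax \<open>a = 0\<close> show False by simp
    qed
    then obtain y where "y \<in> S" and y: "r * norm a \<le> - a \<bullet> y"
      using support[of "- a"] by auto
    have "- (a \<bullet> x) \<le> norm a * norm x"
      using norm_cauchy_schwarz[of "- a" x] by simp
    also have "\<dots> \<le> r * norm a" using x by (simp add: mult_left_mono mult.commute[of r])
    finally have "a \<bullet> y \<le> a \<bullet> x" using y by simp
    moreover have "b < a \<bullet> y" using hull hull_inc[OF \<open>y \<in> S\<close>] by blast
    ultimately show False using ax by simp
  qed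
qed

theorem corollary4p3:
  fixes u :: "nat \<Rightarrow> 'a::euclidean_space" and c :: "nat \<Rightarrow> real" and m :: nat
  assumes "john_decomposition_fun m u c"
  shows "(\<Sum>i<m. c i) = real DIM('a) + 1 \<and>
         cball 0 (1 / (real DIM('a) + 1)) \<subseteq> convex hull (u ` {..<m})"
proof
  show "(\<Sum>i<m. c i) = real DIM('a) + 1"
    using assms by (rule john_decomposition_fun_sum_weights)
  show "cball 0 (1 / (real DIM('a) + 1)) \<subseteq> convex hull (u ` {..<m})"
  proof (rule cball_subset_convex_hull_if_support)
    fix w :: 'a assume "w \<noteq> 0"
    then obtain i where "i < m" and "norm w \<le> (real DIM('a) + 1) * (u i \<bullet> w)"
      using john_decomposition_fun_support[OF assms] by blast
    then show "\<exists>y\<in>u ` {..<m}. 1 / (real DIM('a) + 1) * norm w \<le> w \<bullet> y"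
      by (auto simp: field_simps inner_commute)
  qed simp
qed

end
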